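(* Let $G$ be a graph and $\lambda>0$. If two nodes $a,b$ of $G$ are $(\ell,d)$ connected, then $$\mathbb{E}_G[x_ax_b]\;\ge\;1-\frac{2}{1+\dfrac{(1+(\tanh\lambda)^{\ell})^{d}}{(1-(\tanh\lambda)^{\ell})^{d}}}.$$
   Context: For a graph $G=(V,E)$ and $\lambda>0$, $f_G(\mathbf{x})=\frac{1}{Z}\exp\big(\sum_{(i,j)\in E}\lambda x_ix_j\big)$ on $\{-1,+1\}^V$, and $\mathbb{E}_G$ denotes expectation under $f_G$. Two nodes $a,b$ are $(\ell,d)$ connected if there exist $d$ node-disjoint paths between $a$ and $b$, each of length at most $\ell$. *)

theory Defs
  imports Complex_Main
begin

definition simple_graph :: "'a set \<Rightarrow> 'a set set \<Rightarrow> bool" where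
  "simple_graph V E \<longleftrightarrow> finite V \<and> (\<forall>e\<in>E. e \<subseteq> V \<and> card e = 2)"

definition configs :: "'a set \<Rightarrow> ('a \<Rightarrow> real) set" where
  "configs V = {x. (\<forall>v\<in>V. x v = -1 \<or> x v = 1) \<and> (\<forall>v. v \<notin> V \<longrightarrow> x v = 0)}"

definition ising_weight :: "'a set set \<Rightarrow> real \<Rightarrow> ('a \<Rightarrow> real) \<Rightarrow> real" where
  "ising_weight E lam x = exp (\<Sum>e\<in>E. lam * (\<Prod>v\<in>e. x v))"

definition ising_expect :: "'a set \<Rightarrow> 'a set set \<Rightarrow> real \<Rightarrow> (('a \<Rightarrow> real) \<Rightarrow> real) \<Rightarrow> real" where
  "ising_expect V E lam g =
     (\<Sum>x\<in>configs V. g x * ising_weight E lam x) / (\<Sum>x\<in>configs V. ising_weight E lam x)"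

(* p is a (simple) path from a to b in the graph; its length is length p - 1 edges *)
definition is_path :: "'a set set \<Rightarrow> 'a \<Rightarrow> 'a \<Rightarrow> 'a list \<Rightarrow> bool" where
  "is_path E a b p \<longleftrightarrow> p \<noteq> [] \<and> hd p = a \<and> last p = b \<and> distinct p \<and>
     (\<forall>i. Suc i < length p \<longrightarrow> {p ! i, p ! Suc i} \<in> E)"

definition ld_connected :: "'a set set \<Rightarrow> nat \<Rightarrow> nat \<Rightarrow> 'a \<Rightarrow> 'a \<Rightarrow> bool" where
  "ld_connected E l d a b \<longleftrightarrow>
     (\<exists>P :: nat \<Rightarrow> 'a list.
        inj_on P {..<d} \<and>
        (\<forall>i<d. is_path E a b (P i) \<and> length (P i) - 1 \<le> l) \<and>
        (\<forall>i<d. \<forall>j<d. i \<noteq> j \<longrightarrow> set (P i) \<inter> set (P j) \<subseteq> {a, b}))"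

end

theory Submission
  imports Defs
begin

text \<open>With \<open>t = tanh \<lambda>\<close> every edge factor is \<open>exp (\<lambda> x\<^sub>e) = cosh \<lambda> (1 + t x\<^sub>e)\<close>, so
  writing \<open>Z \<plusminus> N = \<Sum>\<^sub>x (1 \<plusminus> x\<^sub>a x\<^sub>b) W(x)\<close> for the weight \<open>W = \<Prod>\<^sub>e (1 + t x\<^sub>e)\<close> it suffices
  to show \<open>r\<^sup>d |Z - N| \<le> Z + N\<close> with \<open>r = (1 + t\<^sup>l) / (1 - t\<^sup>l)\<close>.
  Along a path \<open>Q\<close> from \<open>a\<close> to \<open>b\<close> with \<open>k \<le> l\<close> edges the product of the edge spins telescopes to
  \<open>x\<^sub>a x\<^sub>b\<close>; hence on the event \<open>x\<^sub>a x\<^sub>b = \<sigma>\<close> the monomials of \<open>H \<subseteq> Q\<close> and \<open>Q - H\<close> coincide up to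
  the sign \<open>\<sigma>\<close>, and pairing them turns the expansion of the path's weight into one with coefficients
  \<open>(t\<^sup>h + \<sigma> t\<^sup>k\<^sup>-\<^sup>h) / 2\<close>. For \<open>\<sigma> = -1\<close> these are at most \<open>1/r\<close> times those for \<open>\<sigma> = 1\<close>.
  Griffiths' first inequality (the configuration sum of any nonnegative polynomial in the
  spins is nonnegative) lets this comparison pass through the remaining weight, and since the
  \<open>d\<close> paths are edge-disjoint their factors contribute \<open>r\<close> each.\<close>

lemma configs_insert:
  assumes "v \<notin> V"
  shows "configs (insert v V) = (\<lambda>y. y(v := 1)) ` configs V \<union> (\<lambda>y. y(v := -1)) ` configs V"
proof (intro equalityI subsetI)
  fix x assume x: "x \<in> configs (insert v V)"
  have restr: "x(v := 0) \<in> configs V" using x assms unfolding configs_def by auto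
  have "x v = 1 \<or> x v = -1" using x unfolding configs_def by auto
  then have "x = (x(v := 0))(v := 1) \<or> x = (x(v := 0))(v := -1)" by auto
  then show "x \<in> (\<lambda>y. y(v := 1)) ` configs V \<union> (\<lambda>y. y(v := -1)) ` configs V"
    using restr by blast
next
  fix x assume "x \<in> (\<lambda>y. y(v := 1)) ` configs V \<union> (\<lambda>y. y(v := -1)) ` configs V"
  then show "x \<in> configs (insert v V)" using assms unfolding configs_def by (auto; metis)
qed

lemma finite_configs: "finite V \<Longrightarrow> finite (configs V)"
proof (induction V rule: finite_induct)
  case empty
  have "configs ({} :: 'a set) = {\<lambda>_. 0}" unfolding configs_def by auto
  then show ?case by simp
qed (simp add: configs_insert)

lemma sum_configs_insert:
  assumes "v \<notin> V" "finite V"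
  shows "(\<Sum>x\<in>configs (insert v V). f x) =
         (\<Sum>y\<in>configs V. f (y(v := 1))) + (\<Sum>y\<in>configs V. f (y(v := -1)))"
proof -
  have "y v = 0" if "y \<in> configs V" for y using that assms unfolding configs_def by auto
  then have inj: "inj_on (\<lambda>y. y(v := c)) (configs V)" for c :: real
    by (intro inj_onI) (metis fun_upd_idem_iff fun_upd_upd)
  have disj: "(\<lambda>y. y(v := 1)) ` configs V \<inter> (\<lambda>y. y(v := -1)) ` configs V = {}"
    by (auto dest: fun_cong[where x = v])
  have "(\<Sum>x\<in>configs (insert v V). f x) =
     (\<Sum>x\<in>(\<lambda>y. y(v := 1)) ` configs V. f x) + (\<Sum>x\<in>(\<lambda>y. y(v := -1)) ` configs V. f x)"
    unfolding configs_insert[OF assms(1)]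
    by (rule sum.union_disjoint) (use assms disj finite_configs in auto)
  then show ?thesis by (simp add: sum.reindex[OF inj])
qed

lemma configs_square: "x \<in> configs V \<Longrightarrow> v \<in> V \<Longrightarrow> x v ^ 2 = 1"
  unfolding configs_def by auto

text \<open>Summing out a spin of odd degree in the monomial gives \<open>0\<close>, of even degree doubles the sum.\<close>

lemma sum_configs_monomial_nonneg:
  assumes "finite V" "set vs \<subseteq> V"
  shows "0 \<le> (\<Sum>x\<in>configs V. prod_list (map x vs))"
  using assms
proof (induction V arbitrary: vs rule: finite_induct)
  case (insert v V)
  let ?ws = "filter (\<lambda>u. u \<noteq> v) vs"
  have upd: "prod_list (map (y(v := c)) vs) = c ^ count_list vs v * prod_list (map y ?ws)"
    for y and c :: real by (induction vs) auto
  have "(\<Sum>x\<in>configs (insert v V). prod_list (map x vs)) =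
     (1 + (-1) ^ count_list vs v) * (\<Sum>y\<in>configs V. prod_list (map y ?ws))"
    by (simp add: sum_configs_insert insert upd sum_distrib_left algebra_simps flip: sum.distrib)
  moreover have "0 \<le> 1 + (-1::real) ^ count_list vs v"
    by (cases "even (count_list vs v)") auto
  moreover have "0 \<le> (\<Sum>y\<in>configs V. prod_list (map y ?ws))"
    using insert.prems by (intro insert.IH) auto
  ultimately show ?case by simp
qed simp

definition monomial_sum :: "(real \<times> 'a list) list \<Rightarrow> ('a \<Rightarrow> real) \<Rightarrow> real" where
  "monomial_sum L x = (\<Sum>(c, vs)\<leftarrow>L. c * prod_list (map x vs))"

definition nonneg_poly :: "'a set \<Rightarrow> (('a \<Rightarrow> real) \<Rightarrow> real) \<Rightarrow> bool" where
  "nonneg_poly V f \<longleftrightarrow> (\<exists>L. (\<forall>(c, vs)\<in>set L. 0 \<le> c \<and> set vs \<subseteq> V) \<and>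
      (\<forall>x\<in>configs V. f x = monomial_sum L x))"

lemma monomial_sum_product:
  "monomial_sum (concat (map (\<lambda>(c, vs). map (\<lambda>(d, ws). (c * d, vs @ ws)) L2) L1)) x =
   monomial_sum L1 x * monomial_sum L2 x"
  unfolding monomial_sum_def
  by (induction L1) (auto simp: sum_list_const_mult[symmetric] o_def algebra_simps case_prod_unfold)

lemma sum_configs_nonneg_poly:
  assumes "finite V" "nonneg_poly V f"
  shows "0 \<le> (\<Sum>x\<in>configs V. f x)"
proof -
  obtain L where L: "\<forall>(c, vs)\<in>set L. 0 \<le> c \<and> set vs \<subseteq> V"
    and f: "\<forall>x\<in>configs V. f x = monomial_sum L x"
    using assms(2) unfolding nonneg_poly_def by blast
  have "(\<Sum>x\<in>configs V. f x) = (\<Sum>(c, vs)\<leftarrow>L. c * (\<Sum>x\<in>configs V. prod_list (map x vs)))"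
    using f by (simp add: monomial_sum_def sum_list_sum_nth sum.swap[of _ "configs V"]
        sum_distrib_left case_prod_unfold)
  also have "\<dots> \<ge> 0"
    using L sum_configs_monomial_nonneg[OF assms(1)]
    by (intro sum_list_nonneg) (auto intro: mult_nonneg_nonneg)
  finally show ?thesis .
qed

lemma nonneg_poly_const: "0 \<le> c \<Longrightarrow> nonneg_poly V (\<lambda>x. c)"
  unfolding nonneg_poly_def monomial_sum_def by (rule exI[of _ "[(c, [])]"]) auto

lemma nonneg_poly_var: "v \<in> V \<Longrightarrow> nonneg_poly V (\<lambda>x. x v)"
  unfolding nonneg_poly_def monomial_sum_def by (rule exI[of _ "[(1, [v])]"]) auto

lemma nonneg_poly_add:
  assumes "nonneg_poly V f" "nonneg_poly V g"
  shows "nonneg_poly V (\<lambda>x. f x + g x)"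
proof -
  obtain L1 L2 where "\<forall>(c, vs)\<in>set L1. 0 \<le> c \<and> set vs \<subseteq> V" "\<forall>x\<in>configs V. f x = monomial_sum L1 x"
    "\<forall>(c, vs)\<in>set L2. 0 \<le> c \<and> set vs \<subseteq> V" "\<forall>x\<in>configs V. g x = monomial_sum L2 x"
    using assms unfolding nonneg_poly_def by blast
  then show ?thesis
    unfolding nonneg_poly_def by (intro exI[of _ "L1 @ L2"]) (auto simp: monomial_sum_def)
qed

lemma nonneg_poly_mult:
  assumes "nonneg_poly V f" "nonneg_poly V g"
  shows "nonneg_poly V (\<lambda>x. f x * g x)"
proof -
  obtain L1 L2 where "\<forall>(c, vs)\<in>set L1. 0 \<le> c \<and> set vs \<subseteq> V" "\<forall>x\<in>configs V. f x = monomial_sum L1 x"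
    "\<forall>(c, vs)\<in>set L2. 0 \<le> c \<and> set vs \<subseteq> V" "\<forall>x\<in>configs V. g x = monomial_sum L2 x"
    using assms unfolding nonneg_poly_def by blast
  then show ?thesis
    unfolding nonneg_poly_def
    by (intro exI[of _ "concat (map (\<lambda>(c, vs). map (\<lambda>(d, ws). (c * d, vs @ ws)) L2) L1)"])
      (fastforce simp: monomial_sum_product)
qed

lemma nonneg_poly_prod:
  "finite A \<Longrightarrow> (\<And>i. i \<in> A \<Longrightarrow> nonneg_poly V (g i)) \<Longrightarrow> nonneg_poly V (\<lambda>x. \<Prod>i\<in>A. g i x)"
  by (induction A rule: finite_induct) (auto intro: nonneg_poly_const nonneg_poly_mult)

definition spin_prod :: "'a set \<Rightarrow> ('a \<Rightarrow> real) \<Rightarrow> real" where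
  "spin_prod e x = (\<Prod>v\<in>e. x v)"

definition edge_monomial :: "'a set set \<Rightarrow> ('a \<Rightarrow> real) \<Rightarrow> real" where
  "edge_monomial Q x = (\<Prod>e\<in>Q. spin_prod e x)"

definition tanh_weight :: "real \<Rightarrow> 'a set set \<Rightarrow> ('a \<Rightarrow> real) \<Rightarrow> real" where
  "tanh_weight t Q x = (\<Prod>e\<in>Q. 1 + t * spin_prod e x)"

lemma spin_prod_square: "e \<subseteq> V \<Longrightarrow> x \<in> configs V \<Longrightarrow> spin_prod e x ^ 2 = 1"
  unfolding spin_prod_def prod_power_distrib using configs_square
  by (metis (no_types, lifting) prod.neutral subsetD)

lemma edge_monomial_square:
  "(\<forall>e\<in>Q. e \<subseteq> V) \<Longrightarrow> x \<in> configs V \<Longrightarrow> edge_monomial Q x ^ 2 = 1"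
  unfolding edge_monomial_def prod_power_distrib by (auto intro!: prod.neutral intro: spin_prod_square)

lemma nonneg_poly_spin_prod: "finite V \<Longrightarrow> e \<subseteq> V \<Longrightarrow> nonneg_poly V (spin_prod e)"
  unfolding spin_prod_def[abs_def]
  by (rule nonneg_poly_prod) (auto intro: nonneg_poly_var dest: finite_subset)

lemma nonneg_poly_edge_monomial:
  "finite V \<Longrightarrow> finite Q \<Longrightarrow> \<forall>e\<in>Q. e \<subseteq> V \<Longrightarrow> nonneg_poly V (edge_monomial Q)"
  unfolding edge_monomial_def[abs_def] by (rule nonneg_poly_prod) (auto intro: nonneg_poly_spin_prod)

lemma nonneg_poly_tanh_weight:
  "finite V \<Longrightarrow> finite Q \<Longrightarrow> \<forall>e\<in>Q. e \<subseteq> V \<Longrightarrow> 0 \<le> t \<Longrightarrow> nonneg_poly V (tanh_weight t Q)"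
  unfolding tanh_weight_def[abs_def]
  by (rule nonneg_poly_prod) (auto intro!: nonneg_poly_add nonneg_poly_mult nonneg_poly_const nonneg_poly_spin_prod)

lemma tanh_weight_expand:
  assumes "finite Q"
  shows "tanh_weight t Q x = (\<Sum>H\<in>Pow Q. t ^ card H * edge_monomial H x)"
proof -
  have "tanh_weight t Q x = (\<Prod>e\<in>Q. t * spin_prod e x + 1)"
    unfolding tanh_weight_def by (simp add: add.commute)
  also have "\<dots> = (\<Sum>H\<in>Pow Q. (\<Prod>e\<in>H. t * spin_prod e x) * (\<Prod>e\<in>Q - H. 1))"
    by (rule prod_add[OF assms])
  also have "\<dots> = (\<Sum>H\<in>Pow Q. t ^ card H * edge_monomial H x)"
    by (rule sum.cong) (auto simp: prod.distrib edge_monomial_def)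
  finally show ?thesis .
qed

lemma tanh_weight_pair_complements:
  assumes "finite Q" and "\<forall>e\<in>Q. e \<subseteq> V" and "x \<in> configs V" and "edge_monomial Q x = y"
    and "y ^ 2 = 1" and "\<sigma> ^ 2 = 1"
  shows "(1 + \<sigma> * y) * tanh_weight t Q x =
    (\<Sum>H\<in>Pow Q. (t ^ card H + \<sigma> * t ^ (card Q - card H)) / 2 * ((1 + \<sigma> * y) * edge_monomial H x))"
proof -
  define L where "L = (\<Sum>H\<in>Pow Q. t ^ card H * ((1 + \<sigma> * y) * edge_monomial H x))"
  have L: "(1 + \<sigma> * y) * tanh_weight t Q x = L"
    unfolding L_def tanh_weight_expand[OF assms(1)] sum_distrib_left by (rule sum.cong) auto
  have bij: "bij_betw (\<lambda>H. Q - H) (Pow Q) (Pow Q)"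
    by (rule bij_betw_byWitness[where f' = "\<lambda>H. Q - H"]) auto
  have "L = (\<Sum>H\<in>Pow Q. t ^ card (Q - H) * ((1 + \<sigma> * y) * edge_monomial (Q - H) x))"
    unfolding L_def by (rule sum.reindex_bij_betw[OF bij, symmetric])
  also have "\<dots> = (\<Sum>H\<in>Pow Q. \<sigma> * t ^ (card Q - card H) * ((1 + \<sigma> * y) * edge_monomial H x))"
  proof (rule sum.cong[OF refl])
    fix H assume H: "H \<in> Pow Q"
    then have "finite H" using assms(1) finite_subset by auto
    have "y = edge_monomial (Q - H) x * edge_monomial H x"
      unfolding edge_monomial_def assms(4)[symmetric] using H assms(1) by (simp add: prod.subset_diff)
    moreover have "edge_monomial H x ^ 2 = 1"
      using H assms(2,3) by (intro edge_monomial_square) auto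
    ultimately have "edge_monomial (Q - H) x = y * edge_monomial H x"
      by (metis mult.assoc mult.right_neutral power2_eq_square)
    moreover have "(1 + \<sigma> * y) * y = \<sigma> * (1 + \<sigma> * y)"
      using assms(5,6) by (simp add: algebra_simps power2_eq_square)
    ultimately show "t ^ card (Q - H) * ((1 + \<sigma> * y) * edge_monomial (Q - H) x) =
        \<sigma> * t ^ (card Q - card H) * ((1 + \<sigma> * y) * edge_monomial H x)"
      using H \<open>finite H\<close> by (simp add: card_Diff_subset mult.assoc[symmetric])
  qed
  finally have L_swap: "L = \<dots>" .
  have "L + L = (\<Sum>H\<in>Pow Q. (t ^ card H + \<sigma> * t ^ (card Q - card H)) * ((1 + \<sigma> * y) * edge_monomial H x))"
    by (subst (2) L_swap) (simp add: L_def sum.distrib[symmetric] algebra_simps)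
  then show ?thesis
    using L by (simp add: sum_divide_distrib[symmetric] field_simps)
qed

definition corr_sum :: "'a set \<Rightarrow> 'a \<Rightarrow> 'a \<Rightarrow> real \<Rightarrow> (('a \<Rightarrow> real) \<Rightarrow> real) \<Rightarrow> real" where
  "corr_sum V a b \<sigma> f = (\<Sum>x\<in>configs V. (1 + \<sigma> * (x a * x b)) * f x)"

lemma corr_sum_mult_tanh_weight:
  assumes "a \<in> V" "b \<in> V" and "finite Q" and "\<forall>e\<in>Q. e \<subseteq> V"
    and "\<forall>x\<in>configs V. edge_monomial Q x = x a * x b" and "\<sigma> ^ 2 = 1"
  shows "corr_sum V a b \<sigma> (\<lambda>x. F x * tanh_weight t Q x) =
    (\<Sum>H\<in>Pow Q. (t ^ card H + \<sigma> * t ^ (card Q - card H)) / 2 *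
       corr_sum V a b \<sigma> (\<lambda>x. F x * edge_monomial H x))"
proof -
  have "(1 + \<sigma> * (x a * x b)) * (F x * tanh_weight t Q x) =
    (\<Sum>H\<in>Pow Q. (t ^ card H + \<sigma> * t ^ (card Q - card H)) / 2 *
       ((1 + \<sigma> * (x a * x b)) * (F x * edge_monomial H x)))"
    if x: "x \<in> configs V" for x
  proof -
    have "(x a * x b) ^ 2 = 1"
      using configs_square[OF x assms(1)] configs_square[OF x assms(2)] by (simp add: power_mult_distrib)
    have "(1 + \<sigma> * (x a * x b)) * (F x * tanh_weight t Q x) =
      F x * ((1 + \<sigma> * (x a * x b)) * tanh_weight t Q x)"
      by (simp add: mult_ac)
    also have "\<dots> = F x * (\<Sum>H\<in>Pow Q. (t ^ card H + \<sigma> * t ^ (card Q - card H)) / 2 *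
         ((1 + \<sigma> * (x a * x b)) * edge_monomial H x))"
      using assms x \<open>(x a * x b) ^ 2 = 1\<close> by (subst tanh_weight_pair_complements) auto
    also have "\<dots> = (\<Sum>H\<in>Pow Q. (t ^ card H + \<sigma> * t ^ (card Q - card H)) / 2 *
       ((1 + \<sigma> * (x a * x b)) * (F x * edge_monomial H x)))"
      by (simp add: sum_distrib_left mult_ac)
    finally show ?thesis .
  qed
  then show ?thesis
    unfolding corr_sum_def sum_distrib_left by (simp add: sum.swap[of _ "configs V"])
qed

text \<open>Quantifying over all nonnegative polynomial prefactors \<open>K\<close> is what lets the bound be
  proved one path at a time: the edge monomials produced by expanding a path's weight are
  absorbed into \<open>K\<close>.\<close>

definition corr_dominated :: "'a set \<Rightarrow> 'a \<Rightarrow> 'a \<Rightarrow> real \<Rightarrow> (('a \<Rightarrow> real) \<Rightarrow> real) \<Rightarrow> bool" where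
  "corr_dominated V a b \<rho> G \<longleftrightarrow> (\<forall>K. nonneg_poly V K \<longrightarrow>
     \<rho> * \<bar>corr_sum V a b (-1) (\<lambda>x. K x * G x)\<bar> \<le> corr_sum V a b 1 (\<lambda>x. K x * G x))"

lemma corr_dominated_one:
  assumes "finite V" "a \<in> V" "b \<in> V"
  shows "corr_dominated V a b 1 (\<lambda>x. 1)"
  unfolding corr_dominated_def
proof (intro allI impI)
  fix K assume K: "nonneg_poly V K"
  have "0 \<le> (\<Sum>x\<in>configs V. K x)"
    using assms(1) K by (rule sum_configs_nonneg_poly)
  moreover have "0 \<le> (\<Sum>x\<in>configs V. x a * x b * K x)"
    using assms by (intro sum_configs_nonneg_poly nonneg_poly_mult nonneg_poly_var K)
  ultimately show "1 * \<bar>corr_sum V a b (-1) (\<lambda>x. K x * 1)\<bar> \<le> corr_sum V a b 1 (\<lambda>x. K x * 1)"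
    unfolding corr_sum_def by (simp add: algebra_simps sum.distrib sum_subtractf)
qed

lemma corr_dominated_mult_tanh_weight:
  assumes "finite V" "a \<in> V" "b \<in> V" and "0 \<le> t" "0 \<le> r" "0 \<le> \<rho>"
    and "finite Q" "\<forall>e\<in>Q. e \<subseteq> V" and "\<forall>x\<in>configs V. edge_monomial Q x = x a * x b"
    and coeff: "\<forall>h\<le>card Q. r * \<bar>t ^ h - t ^ (card Q - h)\<bar> \<le> t ^ h + t ^ (card Q - h)"
    and G: "corr_dominated V a b \<rho> G"
  shows "corr_dominated V a b (r * \<rho>) (\<lambda>x. G x * tanh_weight t Q x)"
  unfolding corr_dominated_def
proof (intro allI impI)
  fix K assume K: "nonneg_poly V K"
  define c where "c \<sigma> H = (t ^ card H + \<sigma> * t ^ (card Q - card H)) / 2" for \<sigma> :: real and H :: "'a set set"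
  define S where "S \<sigma> H = corr_sum V a b \<sigma> (\<lambda>x. (K x * edge_monomial H x) * G x)" for \<sigma> H
  have split: "corr_sum V a b \<sigma> (\<lambda>x. K x * (G x * tanh_weight t Q x)) = (\<Sum>H\<in>Pow Q. c \<sigma> H * S \<sigma> H)"
    if "\<sigma> ^ 2 = 1" for \<sigma>
    using corr_sum_mult_tanh_weight[OF assms(2,3,7,8,9) that, of "\<lambda>x. K x * G x" t]
    unfolding c_def S_def by (simp add: mult_ac)
  have S: "\<rho> * \<bar>S (-1) H\<bar> \<le> S 1 H" if "H \<in> Pow Q" for H
  proof -
    have "nonneg_poly V (\<lambda>x. K x * edge_monomial H x)"
      using that assms(1,7,8) K
      by (intro nonneg_poly_mult nonneg_poly_edge_monomial) (auto dest: finite_subset)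
    then show ?thesis using G unfolding corr_dominated_def S_def by blast
  qed
  have c: "r * \<bar>c (-1) H\<bar> \<le> c 1 H" if "H \<in> Pow Q" for H
  proof -
    have "card H \<le> card Q" using that assms(7) by (simp add: card_mono)
    then show ?thesis using coeff unfolding c_def by simp
  qed
  have "r * \<rho> * \<bar>\<Sum>H\<in>Pow Q. c (-1) H * S (-1) H\<bar> \<le> r * \<rho> * (\<Sum>H\<in>Pow Q. \<bar>c (-1) H * S (-1) H\<bar>)"
    using assms(5,6) by (intro mult_left_mono sum_abs) auto
  also have "\<dots> = (\<Sum>H\<in>Pow Q. (r * \<bar>c (-1) H\<bar>) * (\<rho> * \<bar>S (-1) H\<bar>))"
    by (simp add: sum_distrib_left abs_mult mult_ac)
  also have "\<dots> \<le> (\<Sum>H\<in>Pow Q. c 1 H * S 1 H)"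
    using S c assms(4,6) by (intro sum_mono mult_mono) (auto simp: c_def)
  finally show "r * \<rho> * \<bar>corr_sum V a b (-1) (\<lambda>x. K x * (G x * tanh_weight t Q x))\<bar>
      \<le> corr_sum V a b 1 (\<lambda>x. K x * (G x * tanh_weight t Q x))"
    using split[of 1] split[of "-1"] by simp
qed

lemma corr_dominated_prod_tanh_weight:
  assumes "finite V" "a \<in> V" "b \<in> V" and "0 \<le> t" "0 \<le> r"
    and "\<forall>i<m. finite (Q i) \<and> (\<forall>e\<in>Q i. e \<subseteq> V) \<and>
           (\<forall>x\<in>configs V. edge_monomial (Q i) x = x a * x b) \<and>
           (\<forall>h\<le>card (Q i). r * \<bar>t ^ h - t ^ (card (Q i) - h)\<bar> \<le> t ^ h + t ^ (card (Q i) - h))"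
  shows "corr_dominated V a b (r ^ m) (\<lambda>x. \<Prod>i<m. tanh_weight t (Q i) x)"
  using assms(6)
proof (induction m)
  case 0
  then show ?case using corr_dominated_one[OF assms(1-3)] by simp
next
  case (Suc m)
  have "corr_dominated V a b (r ^ m) (\<lambda>x. \<Prod>i<m. tanh_weight t (Q i) x)"
    using Suc.prems less_SucI by (intro Suc.IH) blast
  moreover have "finite (Q m)" "\<forall>e\<in>Q m. e \<subseteq> V" "\<forall>x\<in>configs V. edge_monomial (Q m) x = x a * x b"
    "\<forall>h\<le>card (Q m). r * \<bar>t ^ h - t ^ (card (Q m) - h)\<bar> \<le> t ^ h + t ^ (card (Q m) - h)"
    using Suc.prems[rule_format, OF lessI] by auto
  ultimately have "corr_dominated V a b (r * r ^ m) (\<lambda>x. (\<Prod>i<m. tanh_weight t (Q i) x) * tanh_weight t (Q m) x)"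
    using assms(1-5) by (intro corr_dominated_mult_tanh_weight) auto
  then show ?case by simp
qed

definition path_edges :: "'a list \<Rightarrow> 'a set set" where
  "path_edges p = (\<lambda>j. {p ! j, p ! Suc j}) ` {..< length p - 1}"

lemma path_edges_subset: "is_path E a b p \<Longrightarrow> path_edges p \<subseteq> E"
  unfolding path_edges_def is_path_def by auto

lemma card_path_edges_le: "card (path_edges p) \<le> length p - 1"
  unfolding path_edges_def using card_image_le[of "{..< length p - 1}"] by simp

lemma set_path_subset:
  assumes p: "is_path E a b p" and "\<forall>e\<in>E. e \<subseteq> V" and "a \<in> V"
  shows "set p \<subseteq> V"
proof
  fix v assume "v \<in> set p"
  then obtain j where j: "j < length p" "v = p ! j" by (auto simp: in_set_conv_nth)
  have "v = a \<or> (\<exists>i. Suc i < length p \<and> v \<in> {p ! i, p ! Suc i})"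
  proof (cases j)
    case 0
    then show ?thesis using j p unfolding is_path_def by (auto simp: hd_conv_nth)
  next
    case (Suc i)
    then show ?thesis using j by auto
  qed
  then show "v \<in> V" using p assms(2,3) unfolding is_path_def by blast
qed

lemma prod_telescope:
  "(\<forall>j\<le>m. y j ^ 2 = (1::real)) \<Longrightarrow> (\<Prod>j<m. y j * y (Suc j)) = y 0 * y m"
proof (induction m)
  case (Suc m)
  then have "(\<Prod>j<Suc m. y j * y (Suc j)) = y 0 * (y m * y m) * y (Suc m)" by simp
  also have "y m * y m = 1" using Suc.prems by (simp add: power2_eq_square)
  finally show ?case by simp
qed (simp add: power2_eq_square)

lemma edge_monomial_path_edges:
  assumes p: "is_path E a b p" and "set p \<subseteq> V" and x: "x \<in> configs V"
  shows "edge_monomial (path_edges p) x = x a * x b"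
proof -
  have d: "distinct p" and ne: "p \<noteq> []" using p unfolding is_path_def by auto
  have inj: "inj_on (\<lambda>j. {p ! j, p ! Suc j}) {..< length p - 1}"
  proof (rule inj_onI)
    fix i j assume "i \<in> {..< length p - 1}" "j \<in> {..< length p - 1}"
      and eq: "{p ! i, p ! Suc i} = {p ! j, p ! Suc j}"
    then show "i = j" using d by (auto simp: doubleton_eq_iff nth_eq_iff_index_eq)
  qed
  have "edge_monomial (path_edges p) x = (\<Prod>j<length p - 1. spin_prod {p ! j, p ! Suc j} x)"
    unfolding edge_monomial_def path_edges_def prod.reindex[OF inj] by (simp add: o_def)
  also have "\<dots> = (\<Prod>j<length p - 1. x (p ! j) * x (p ! Suc j))"
    using d by (intro prod.cong) (auto simp: spin_prod_def nth_eq_iff_index_eq)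
  also have "\<dots> = x (p ! 0) * x (p ! (length p - 1))"
  proof (rule prod_telescope[where y = "\<lambda>j. x (p ! j)"], intro allI impI)
    fix j assume "j \<le> length p - 1"
    then have "j < length p" using ne by (cases p) auto
    then have "p ! j \<in> V" using assms(2) nth_mem by blast
    then show "x (p ! j) ^ 2 = 1" using configs_square[OF x] by blast
  qed
  also have "\<dots> = x a * x b"
    using p ne unfolding is_path_def by (simp add: hd_conv_nth last_conv_nth)
  finally show ?thesis .
qed

lemma path_edge_in_ends:
  assumes p: "is_path E a b p" and i: "Suc i < length p" and ab: "{p ! i, p ! Suc i} \<subseteq> {a, b}"
  shows "p = [a, b]"
proof -
  have d: "distinct p" and ne: "p \<noteq> []" using p unfolding is_path_def by auto
  have a: "p ! 0 = a" and b: "p ! (length p - 1) = b"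
    using p ne unfolding is_path_def by (auto simp: hd_conv_nth last_conv_nth)
  have "p ! i \<noteq> b" using b d i by (auto simp: nth_eq_iff_index_eq)
  then have "p ! i = a" using ab by auto
  then have "i = 0" using a d i ne nth_eq_iff_index_eq[OF d, of 0 i] by auto
  moreover have "p ! i \<noteq> p ! Suc i" using d i by (auto simp: nth_eq_iff_index_eq)
  ultimately have "p ! 1 = b" using ab \<open>p ! i = a\<close> by auto
  then have "length p = 2" using b d i \<open>i = 0\<close> by (auto simp: nth_eq_iff_index_eq)
  then show ?thesis using a \<open>p ! 1 = b\<close>
    by (auto simp: list_eq_iff_nth_eq less_Suc_eq numeral_2_eq_2 nth_Cons split: nat.split)
qed

lemma path_edges_disjoint:
  assumes p: "is_path E a b p" and q: "is_path E a b q" and "p \<noteq> q"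
    and "set p \<inter> set q \<subseteq> {a, b}"
  shows "path_edges p \<inter> path_edges q = {}"
proof (rule ccontr)
  assume "path_edges p \<inter> path_edges q \<noteq> {}"
  then obtain i j where i: "i < length p - 1" and j: "j < length q - 1"
    and eq: "{p ! i, p ! Suc i} = {q ! j, q ! Suc j}"
    unfolding path_edges_def by auto
  have "{p ! i, p ! Suc i} \<subseteq> set p" using i by auto
  moreover have "{p ! i, p ! Suc i} \<subseteq> set q" unfolding eq using j by auto
  ultimately have ab: "{p ! i, p ! Suc i} \<subseteq> {a, b}" using assms(4) by blast
  have "p = [a, b]" using path_edge_in_ends[OF p _ ab] i by simp
  moreover have "q = [a, b]" using path_edge_in_ends[OF q _ ab[unfolded eq]] j by simp
  ultimately show False using \<open>p \<noteq> q\<close> by simp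
qed

lemma ld_connected_edge_sets:
  assumes "\<forall>e\<in>E. e \<subseteq> V" "a \<in> V" "ld_connected E l d a b"
  obtains Q :: "nat \<Rightarrow> 'a set set"
  where "\<forall>i<d. Q i \<subseteq> E \<and> card (Q i) \<le> l \<and>
           (\<forall>x\<in>configs V. edge_monomial (Q i) x = x a * x b)"
    and "\<forall>i<d. \<forall>j<d. i \<noteq> j \<longrightarrow> Q i \<inter> Q j = {}"
proof -
  obtain P where inj: "inj_on P {..<d}"
    and path: "\<forall>i<d. is_path E a b (P i) \<and> length (P i) - 1 \<le> l"
    and meet: "\<forall>i<d. \<forall>j<d. i \<noteq> j \<longrightarrow> set (P i) \<inter> set (P j) \<subseteq> {a, b}"
    using assms(3) unfolding ld_connected_def by blast
  show ?thesis
  proof (rule that[of "\<lambda>i. path_edges (P i)"])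
    show "\<forall>i<d. path_edges (P i) \<subseteq> E \<and> card (path_edges (P i)) \<le> l \<and>
           (\<forall>x\<in>configs V. edge_monomial (path_edges (P i)) x = x a * x b)"
      using path assms(1,2) path_edges_subset card_path_edges_le
        edge_monomial_path_edges set_path_subset le_trans by metis
    show "\<forall>i<d. \<forall>j<d. i \<noteq> j \<longrightarrow> path_edges (P i) \<inter> path_edges (P j) = {}"
    proof (intro allI impI)
      fix i j assume "i < d" "j < d" "i \<noteq> j"
      then show "path_edges (P i) \<inter> path_edges (P j) = {}"
        using path meet inj by (intro path_edges_disjoint) (auto simp: inj_on_def)
    qed
  qed
qed

lemma corr_sum_tanh_weight_paths:
  assumes "finite V" "a \<in> V" "b \<in> V" "finite E" "\<forall>e\<in>E. e \<subseteq> V" and "0 \<le> t" "0 \<le> r"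
    and Q: "\<forall>i<d. Q i \<subseteq> E \<and> (\<forall>x\<in>configs V. edge_monomial (Q i) x = x a * x b) \<and>
           (\<forall>h\<le>card (Q i). r * \<bar>t ^ h - t ^ (card (Q i) - h)\<bar> \<le> t ^ h + t ^ (card (Q i) - h))"
    and disj: "\<forall>i<d. \<forall>j<d. i \<noteq> j \<longrightarrow> Q i \<inter> Q j = {}"
  shows "r ^ d * \<bar>corr_sum V a b (-1) (tanh_weight t E)\<bar> \<le> corr_sum V a b 1 (tanh_weight t E)"
proof -
  define U where "U = (\<Union>i<d. Q i)"
  have QE: "Q i \<subseteq> E" if "i < d" for i using Q[rule_format, OF that] by simp
  have fQ: "finite (Q i)" if "i < d" for i using QE[OF that] assms(4) by (rule finite_subset)
  have QV: "\<forall>e\<in>Q i. e \<subseteq> V" if "i < d" for i using QE[OF that] assms(5) by blast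
  have "tanh_weight t E = (\<lambda>x. tanh_weight t (E - U) x * (\<Prod>i<d. tanh_weight t (Q i) x))"
  proof
    fix x
    have "tanh_weight t E x = tanh_weight t (E - U) x * tanh_weight t U x"
      unfolding tanh_weight_def using QE assms(4) by (intro prod.subset_diff) (auto simp: U_def)
    moreover have "tanh_weight t U x = (\<Prod>i<d. tanh_weight t (Q i) x)"
      unfolding tanh_weight_def U_def using fQ disj by (intro prod.UNION_disjoint) auto
    ultimately show "tanh_weight t E x = tanh_weight t (E - U) x * (\<Prod>i<d. tanh_weight t (Q i) x)"
      by simp
  qed
  moreover have "corr_dominated V a b (r ^ d) (\<lambda>x. \<Prod>i<d. tanh_weight t (Q i) x)"
    using assms(1-3,6,7) Q fQ QV by (intro corr_dominated_prod_tanh_weight) auto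
  moreover have "nonneg_poly V (tanh_weight t (E - U))"
    using assms(1,4-6) by (intro nonneg_poly_tanh_weight) auto
  ultimately show ?thesis unfolding corr_dominated_def by simp
qed

lemma sum_configs_tanh_weight_pos:
  assumes "finite V" "\<forall>e\<in>E. e \<subseteq> V" "\<bar>t\<bar> < 1"
  shows "0 < (\<Sum>x\<in>configs V. tanh_weight t E x)"
proof (rule sum_pos2)
  have pos: "0 < tanh_weight t E x" if "x \<in> configs V" for x
    unfolding tanh_weight_def
  proof (rule prod_pos)
    fix e assume "e \<in> E"
    then have "\<bar>spin_prod e x\<bar> = 1"
      using spin_prod_square assms(2) that by (metis abs_power2 abs_square_eq_1 power2_abs)
    then show "0 < 1 + t * spin_prod e x"
      using assms(3) by (auto simp: abs_if split: if_splits)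
  qed
  show "finite (configs V)" using assms(1) by (rule finite_configs)
  show "(\<lambda>v. if v \<in> V then 1 else 0) \<in> configs V" unfolding configs_def by auto
  then show "0 < tanh_weight t E (\<lambda>v. if v \<in> V then 1 else 0)" by (rule pos)
  show "\<And>x. x \<in> configs V \<Longrightarrow> 0 \<le> tanh_weight t E x" using pos less_imp_le by blast
qed

lemma exp_mult_spin:
  assumes "y ^ 2 = (1::real)"
  shows "exp (lam * y) = cosh lam * (1 + tanh lam * y)"
proof -
  have c: "cosh lam \<noteq> 0" using cosh_real_pos[of lam] by simp
  have "y = 1 \<or> y = -1" using assms by (simp add: power2_eq_1_iff)
  then show ?thesis
  proof
    assume "y = 1"
    then show ?thesis using cosh_plus_sinh[of lam] c by (simp add: tanh_def field_simps)
  next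
    assume "y = -1"
    then show ?thesis using cosh_minus_sinh[of lam] c by (simp add: tanh_def field_simps)
  qed
qed

lemma ising_expect_tanh_weight:
  assumes "finite E" "\<forall>e\<in>E. e \<subseteq> V"
  shows "ising_expect V E lam g =
    (\<Sum>x\<in>configs V. g x * tanh_weight (tanh lam) E x) / (\<Sum>x\<in>configs V. tanh_weight (tanh lam) E x)"
proof -
  define C where "C = cosh lam ^ card E"
  have "ising_weight E lam x = C * tanh_weight (tanh lam) E x" if "x \<in> configs V" for x
  proof -
    have "ising_weight E lam x = (\<Prod>e\<in>E. exp (lam * spin_prod e x))"
      unfolding ising_weight_def spin_prod_def by (rule exp_sum[OF assms(1)])
    also have "\<dots> = (\<Prod>e\<in>E. cosh lam * (1 + tanh lam * spin_prod e x))"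
      using assms(2) that by (intro prod.cong refl exp_mult_spin spin_prod_square) auto
    finally show ?thesis unfolding C_def tanh_weight_def by (simp add: prod.distrib)
  qed
  moreover have "C \<noteq> 0" unfolding C_def using cosh_real_pos[of lam] by simp
  ultimately show ?thesis
    unfolding ising_expect_def by (simp add: sum_distrib_left[symmetric] mult.left_commute cong: sum.cong)
qed

lemma corr_sum_expand: "corr_sum V a b \<sigma> f = (\<Sum>x\<in>configs V. f x) + \<sigma> * (\<Sum>x\<in>configs V. x a * x b * f x)"
  unfolding corr_sum_def by (simp add: algebra_simps sum.distrib sum_distrib_left)

lemma ratio_abs_diff_le:
  fixes s A B :: real
  assumes "0 \<le> s" "s < 1" "s * A \<le> B" "s * B \<le> A"
  shows "(1 + s) / (1 - s) * \<bar>A - B\<bar> \<le> A + B"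
proof -
  have "(1 + s) * \<bar>A - B\<bar> \<le> (A + B) * (1 - s)"
    using assms by (cases "A \<le> B") (auto simp: algebra_simps)
  then show ?thesis using assms(2) by (simp add: divide_le_eq mult.commute)
qed

lemma tanh_coeff_ratio_bound:
  fixes t :: real
  assumes "0 \<le> t" "t \<le> 1" "h \<le> k" "k \<le> l"
  shows "(1 + t ^ l) / (1 - t ^ l) * \<bar>t ^ h - t ^ (k - h)\<bar> \<le> t ^ h + t ^ (k - h)"
proof (cases "t ^ l = 1")
  case False
  have "t ^ l < 1" using False assms(1,2) by (simp add: order.not_eq_order_implies_strict power_le_one)
  moreover have "t ^ l * t ^ h \<le> t ^ (k - h)" "t ^ l * t ^ (k - h) \<le> t ^ h"
    unfolding power_add[symmetric] using assms by (auto intro: power_decreasing)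
  ultimately show ?thesis using assms(1) by (intro ratio_abs_diff_le) auto
qed (use assms in simp)

lemma one_minus_two_div_le_ratio:
  fixes R Z N :: real
  assumes "0 < Z" "0 \<le> R" "R * \<bar>Z - N\<bar> \<le> Z + N"
  shows "1 - 2 / (1 + R) \<le> N / Z"
proof -
  have "R * (Z - N) \<le> Z + N" using assms(2,3) by (metis abs_ge_self mult_left_mono order_trans)
  then have "1 - 2 / (1 + R) = (R - 1) / (1 + R)" "(R - 1) / (1 + R) \<le> N / Z"
    using assms(1,2) by (simp_all add: field_simps divide_le_eq le_divide_eq)
  then show ?thesis by simp
qed

theorem lemma3:
  fixes V :: "'a set" and E :: "'a set set" and lam :: real and l d :: nat and a b :: 'a
  assumes "simple_graph V E" and "lam > 0" and "a \<in> V" and "b \<in> V"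
    and "ld_connected E l d a b"
  shows "ising_expect V E lam (\<lambda>x. x a * x b) \<ge>
    1 - 2 / (1 + (1 + tanh lam ^ l) ^ d / (1 - tanh lam ^ l) ^ d)"
proof -
  have V: "finite V" and EV: "\<forall>e\<in>E. e \<subseteq> V" using assms(1) unfolding simple_graph_def by auto
  then have E: "finite E" by (meson Pow_iff finite_Pow_iff rev_finite_subset subsetI)
  define t where "t = tanh lam"
  have t: "0 \<le> t" "t < 1" unfolding t_def using assms(2) tanh_real_lt_1 by auto
  define r where "r = (1 + t ^ l) / (1 - t ^ l)"
  have r: "0 \<le> r" unfolding r_def using t by (simp add: power_le_one)
  obtain Q where Q: "\<forall>i<d. Q i \<subseteq> E \<and> card (Q i) \<le> l \<and>
      (\<forall>x\<in>configs V. edge_monomial (Q i) x = x a * x b)"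
    and disj: "\<forall>i<d. \<forall>j<d. i \<noteq> j \<longrightarrow> Q i \<inter> Q j = {}"
    using ld_connected_edge_sets[OF EV assms(3,5)] .
  have "\<forall>i<d. \<forall>h\<le>card (Q i). r * \<bar>t ^ h - t ^ (card (Q i) - h)\<bar> \<le> t ^ h + t ^ (card (Q i) - h)"
    using Q t unfolding r_def by (intro allI impI tanh_coeff_ratio_bound) auto
  then have "r ^ d * \<bar>corr_sum V a b (-1) (tanh_weight t E)\<bar> \<le> corr_sum V a b 1 (tanh_weight t E)"
    using V assms(3,4) E EV t r disj Q by (intro corr_sum_tanh_weight_paths) auto
  moreover have "0 < (\<Sum>x\<in>configs V. tanh_weight t E x)"
    using V EV t by (intro sum_configs_tanh_weight_pos) auto
  ultimately have "1 - 2 / (1 + r ^ d) \<le> ising_expect V E lam (\<lambda>x. x a * x b)"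
    unfolding ising_expect_tanh_weight[OF E EV] corr_sum_expand t_def[symmetric]
    using r by (intro one_minus_two_div_le_ratio) (auto simp: mult_ac)
  then show ?thesis unfolding r_def t_def by (simp add: power_divide)
qed

end
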